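(* Let $X_1,X_2,\dots$ be i.i.d. $\mathcal{N}(\mu_1,1)$ with $\mu_1\neq0$, let $f_0$ and $f_1$ be the densities of $\mathcal{N}(0,1)$ and $\mathcal{N}(\mu_1,1)$, and for $t\ge0$ let $$\hat\nu_t^{\mathrm{CUSUM}}=\arg\max_{0\le k\le t}\sum_{i=k+1}^t\log\frac{f_1(X_i)}{f_0(X_i)}.$$ Then $$\mathbb{E}\Big[\sup_{t\ge0}\hat\nu_t^{\mathrm{CUSUM}}\Big]\le\sum_{n=1}^\infty n\exp\left(-\frac{n\mu_1^2}{8}\right).$$
   Context: This is the single-stream setting with change-point at time $0$: every observation is drawn from the post-change distribution $\mathcal{N}(\mu_1,1)$. An empty sum equals $0$. *)

theory Defs
  imports "HOL-Probability.Probability"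
begin

definition llr :: "real \<Rightarrow> real \<Rightarrow> real" where
  "llr \<mu>\<^sub>1 x = ln (normal_density \<mu>\<^sub>1 1 x / normal_density 0 1 x)"

definition cusum_stat :: "real \<Rightarrow> (nat \<Rightarrow> 'a \<Rightarrow> real) \<Rightarrow> nat \<Rightarrow> nat \<Rightarrow> 'a \<Rightarrow> real" where
  "cusum_stat \<mu>\<^sub>1 X k t \<omega> = (\<Sum>i\<in>{k+1..t}. llr \<mu>\<^sub>1 (X i \<omega>))"

definition nu_cusum :: "real \<Rightarrow> (nat \<Rightarrow> 'a \<Rightarrow> real) \<Rightarrow> nat \<Rightarrow> 'a \<Rightarrow> nat" where
  "nu_cusum \<mu>\<^sub>1 X t \<omega> =
     (GREATEST k. k \<le> t \<and> (\<forall>j\<le>t. cusum_stat \<mu>\<^sub>1 X j t \<omega> \<le> cusum_stat \<mu>\<^sub>1 X k t \<omega>))"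

end

theory Submission imports Defs begin

text \<open>
  Write \<open>S\<^sub>n = cusum_stat \<mu>\<^sub>1 X 0 n\<close>. Since \<open>S\<^sub>t = S\<^sub>n + cusum_stat \<mu>\<^sub>1 X n t\<close>, the maximiser
  \<open>n = \<nu>\<^sub>t\<close> of the CUSUM statistic satisfies \<open>S\<^sub>n \<le> 0\<close>, so by a Chernoff-type bound
  \<open>\<nu>\<^sub>t \<le> n exp (-S\<^sub>n/2) \<le> \<Sum>\<^sub>k k exp (-S\<^sub>k/2)\<close> for every \<open>t\<close>. Under the post-change law
  \<open>S\<^sub>k = \<mu>\<^sub>1 (X\<^sub>1 + \<dots> + X\<^sub>k) - k\<mu>\<^sub>1\<^sup>2/2\<close> is Gaussian, and the Gaussian moment generating
  function gives \<open>E exp (-S\<^sub>k/2) = exp (-k\<mu>\<^sub>1\<^sup>2/8)\<close>.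
\<close>

lemma llr_eq: "llr \<mu> x = \<mu> * x - \<mu>\<^sup>2 / 2"
  unfolding llr_def normal_density_def
  by (simp add: ln_div ln_mult power2_eq_square algebra_simps) (simp add: field_simps)

lemma cusum_stat_0_eq: "cusum_stat \<mu> X 0 k \<omega> = \<mu> * (\<Sum>i\<in>{1..k}. X i \<omega>) - real k * \<mu>\<^sup>2 / 2"
  unfolding cusum_stat_def llr_eq by (simp add: sum_subtractf sum_distrib_left)

lemma cusum_stat_split:
  assumes "j \<le> n" "n \<le> t"
  shows "cusum_stat \<mu> X j t \<omega> = cusum_stat \<mu> X j n \<omega> + cusum_stat \<mu> X n t \<omega>"
proof -
  have "{j+1..t} = {j+1..n} \<union> {n+1..t}" using assms by auto
  then show ?thesis
    unfolding cusum_stat_def by (simp add: sum.union_disjoint ivl_disj_int)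
qed

lemma borel_measurable_cusum_stat:
  assumes "\<And>i. i \<ge> 1 \<Longrightarrow> X i \<in> borel_measurable M"
  shows "cusum_stat \<mu> X j t \<in> borel_measurable M"
proof -
  have "(\<lambda>\<omega>. \<Sum>i\<in>{j+1..t}. llr \<mu> (X i \<omega>)) \<in> borel_measurable M"
    using assms unfolding llr_eq by (intro borel_measurable_sum) auto
  then show ?thesis unfolding cusum_stat_def by (simp add: fun_eq_iff)
qed

lemma nu_cusum_is_maximiser:
  "nu_cusum \<mu> X t \<omega> \<le> t \<and>
   (\<forall>j\<le>t. cusum_stat \<mu> X j t \<omega> \<le> cusum_stat \<mu> X (nu_cusum \<mu> X t \<omega>) t \<omega>)"
proof -
  define f where "f j = cusum_stat \<mu> X j t \<omega>" for j
  have "Max (f ` {..t}) \<in> f ` {..t}" by (intro Max_in) auto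
  then obtain k where "k \<le> t" "f k = Max (f ` {..t})" by (metis atMost_iff imageE)
  then have "\<exists>k. k \<le> t \<and> (\<forall>j\<le>t. f j \<le> f k)" by auto
  then show ?thesis
    unfolding nu_cusum_def f_def[symmetric] by (rule GreatestI_ex_nat) auto
qed

lemma cusum_stat_0_nu_cusum_nonpos: "cusum_stat \<mu> X 0 (nu_cusum \<mu> X t \<omega>) \<omega> \<le> 0"
proof -
  let ?n = "nu_cusum \<mu> X t \<omega>"
  have "?n \<le> t" "cusum_stat \<mu> X 0 t \<omega> \<le> cusum_stat \<mu> X ?n t \<omega>"
    using nu_cusum_is_maximiser[of \<mu> X t \<omega>] by auto
  then show ?thesis using cusum_stat_split[of 0 ?n t \<mu> X \<omega>] by simp
qed

lemma nu_cusum_le_suminf: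
  "ennreal (real (nu_cusum \<mu> X t \<omega>)) \<le> (\<Sum>k. ennreal (real k * exp (- cusum_stat \<mu> X 0 k \<omega> / 2)))"
proof -
  let ?n = "nu_cusum \<mu> X t \<omega>"
  have "1 \<le> exp (- cusum_stat \<mu> X 0 ?n \<omega> / 2)"
    using cusum_stat_0_nu_cusum_nonpos[of \<mu> X t \<omega>] by simp
  then have "real ?n * 1 \<le> real ?n * exp (- cusum_stat \<mu> X 0 ?n \<omega> / 2)"
    by (rule mult_left_mono) simp
  then have "ennreal (real ?n) \<le> ennreal (real ?n * exp (- cusum_stat \<mu> X 0 ?n \<omega> / 2))"
    by (intro ennreal_leI) simp
  also have "\<dots> \<le> (\<Sum>k. ennreal (real k * exp (- cusum_stat \<mu> X 0 k \<omega> / 2)))"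
    using sum_le_suminf[OF summableI, of "{?n}"] by simp
  finally show ?thesis .
qed

lemma normal_density_mult_exp:
  assumes "\<sigma> > 0"
  shows "normal_density a \<sigma> y * exp (c * y)
       = exp (c * a + c\<^sup>2 * \<sigma>\<^sup>2 / 2) * normal_density (a + c * \<sigma>\<^sup>2) \<sigma> y"
proof -
  have "exp (- (y - a)\<^sup>2 / (2 * \<sigma>\<^sup>2)) * exp (c * y)
      = exp (c * a + c\<^sup>2 * \<sigma>\<^sup>2 / 2) * exp (- (y - (a + c * \<sigma>\<^sup>2))\<^sup>2 / (2 * \<sigma>\<^sup>2))"
    unfolding exp_add[symmetric] using assms by (simp add: field_simps power2_eq_square)
  then show ?thesis unfolding normal_density_def by (simp add: ac_simps)
qed

lemma nn_integral_exp_normal: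
  assumes "distributed M lborel Y (normal_density a \<sigma>)" "\<sigma> > 0"
  shows "(\<integral>\<^sup>+\<omega>. ennreal (exp (c * Y \<omega>)) \<partial>M) = ennreal (exp (c * a + c\<^sup>2 * \<sigma>\<^sup>2 / 2))"
proof -
  have "(\<integral>\<^sup>+\<omega>. ennreal (exp (c * Y \<omega>)) \<partial>M)
      = (\<integral>\<^sup>+y. ennreal (normal_density a \<sigma> y) * ennreal (exp (c * y)) \<partial>lborel)"
    by (rule distributed_nn_integral[OF assms(1), symmetric]) simp
  also have "\<dots> = (\<integral>\<^sup>+y. ennreal (exp (c * a + c\<^sup>2 * \<sigma>\<^sup>2 / 2))
                         * ennreal (normal_density (a + c * \<sigma>\<^sup>2) \<sigma> y) \<partial>lborel)"
    by (simp add: ennreal_mult''[symmetric] normal_density_mult_exp[OF assms(2)] del: ennreal_mult')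
  also have "\<dots> = ennreal (exp (c * a + c\<^sup>2 * \<sigma>\<^sup>2 / 2))"
    using assms(2) by (simp add: nn_integral_cmult) (subst nn_integral_eq_integral; simp)
  finally show ?thesis .
qed

context prob_space
begin

lemma distributed_partial_sum_normal:
  assumes "indep_vars (\<lambda>_. borel) X {1..}"
    and "\<And>i. i \<ge> 1 \<Longrightarrow> distributed M lborel (X i) (\<lambda>x. ennreal (normal_density \<mu> 1 x))"
    and "k \<ge> 1"
  shows "distributed M lborel (\<lambda>\<omega>. \<Sum>i\<in>{1..k}. X i \<omega>) (normal_density (real k * \<mu>) (sqrt (real k)))"
proof -
  have "distributed M lborel (\<lambda>\<omega>. \<Sum>i\<in>{1..k}. X i \<omega>)
          (normal_density (\<Sum>i\<in>{1..k}. \<mu>) (sqrt (\<Sum>i\<in>{1..k}. 1\<^sup>2)))"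
    using assms by (intro sum_indep_normal indep_vars_subset[OF assms(1)]) auto
  then show ?thesis by simp
qed

lemma nn_integral_exp_neg_half_cusum_stat:
  assumes "indep_vars (\<lambda>_. borel) X {1..}"
    and "\<And>i. i \<ge> 1 \<Longrightarrow> distributed M lborel (X i) (\<lambda>x. ennreal (normal_density \<mu> 1 x))"
  shows "(\<integral>\<^sup>+\<omega>. ennreal (exp (- cusum_stat \<mu> X 0 k \<omega> / 2)) \<partial>M) = ennreal (exp (- (real k * \<mu>\<^sup>2) / 8))"
proof (cases "k = 0")
  case True
  then show ?thesis by (simp add: cusum_stat_def emeasure_space_1)
next
  case False
  then have "k \<ge> 1" by simp
  define Y where "Y \<omega> = (\<Sum>i\<in>{1..k}. X i \<omega>)" for \<omega>
  have Y: "distributed M lborel Y (normal_density (real k * \<mu>) (sqrt (real k)))"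
    unfolding Y_def using distributed_partial_sum_normal[OF assms \<open>k \<ge> 1\<close>] by simp
  have "exp (- cusum_stat \<mu> X 0 k \<omega> / 2) = exp (real k * \<mu>\<^sup>2 / 4) * exp (- \<mu> / 2 * Y \<omega>)" for \<omega>
    unfolding cusum_stat_0_eq Y_def exp_add[symmetric] by (simp add: field_simps)
  then have "(\<integral>\<^sup>+\<omega>. ennreal (exp (- cusum_stat \<mu> X 0 k \<omega> / 2)) \<partial>M)
      = (\<integral>\<^sup>+\<omega>. ennreal (exp (real k * \<mu>\<^sup>2 / 4)) * ennreal (exp (- \<mu> / 2 * Y \<omega>)) \<partial>M)"
    by (simp add: ennreal_mult)
  also have "\<dots> = ennreal (exp (real k * \<mu>\<^sup>2 / 4)) * (\<integral>\<^sup>+\<omega>. ennreal (exp (- \<mu> / 2 * Y \<omega>)) \<partial>M)"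
    using distributed_measurable[OF Y] by (intro nn_integral_cmult) simp
  also have "\<dots> = ennreal (exp (real k * \<mu>\<^sup>2 / 4))
                   * ennreal (exp (- \<mu> / 2 * (real k * \<mu>) + (- \<mu> / 2)\<^sup>2 * (sqrt (real k))\<^sup>2 / 2))"
    using \<open>k \<ge> 1\<close> by (subst nn_integral_exp_normal[OF Y]) auto
  also have "\<dots> = ennreal (exp (- (real k * \<mu>\<^sup>2) / 8))"
    by (simp add: ennreal_mult[symmetric] exp_add[symmetric] power2_eq_square field_simps)
  finally show ?thesis .
qed

end

theorem lemma5:
  fixes M :: "'a measure" and X :: "nat \<Rightarrow> 'a \<Rightarrow> real" and \<mu>\<^sub>1 :: real
  assumes "prob_space M"
    and "\<mu>\<^sub>1 \<noteq> 0"
    and "prob_space.indep_vars M (\<lambda>_. borel) X {1..}"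
    and "\<And>i. i \<ge> 1 \<Longrightarrow> distributed M lborel (X i) (\<lambda>x. ennreal (normal_density \<mu>\<^sub>1 1 x))"
  shows "(\<integral>\<^sup>+ \<omega>. (SUP t. ennreal (real (nu_cusum \<mu>\<^sub>1 X t \<omega>))) \<partial>M)
           \<le> (\<Sum>n. ennreal (real n * exp (- (real n * \<mu>\<^sub>1\<^sup>2) / 8)))"
proof -
  let ?term = "\<lambda>k \<omega>. ennreal (real k * exp (- cusum_stat \<mu>\<^sub>1 X 0 k \<omega> / 2))"
  have [measurable]: "cusum_stat \<mu>\<^sub>1 X 0 k \<in> borel_measurable M" for k
    using distributed_measurable[OF assms(4)]
    by (intro borel_measurable_cusum_stat) (simp add: measurable_lborel1)
  have "(\<integral>\<^sup>+ \<omega>. (SUP t. ennreal (real (nu_cusum \<mu>\<^sub>1 X t \<omega>))) \<partial>M) \<le> (\<integral>\<^sup>+ \<omega>. (\<Sum>k. ?term k \<omega>) \<partial>M)"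
    by (intro nn_integral_mono SUP_least nu_cusum_le_suminf)
  also have "\<dots> = (\<Sum>k. \<integral>\<^sup>+ \<omega>. ?term k \<omega> \<partial>M)"
    by (intro nn_integral_suminf) measurable
  also have "\<dots> = (\<Sum>n. ennreal (real n * exp (- (real n * \<mu>\<^sub>1\<^sup>2) / 8)))"
    using prob_space.nn_integral_exp_neg_half_cusum_stat[OF assms(1,3,4)]
    by (simp add: ennreal_mult nn_integral_cmult)
  finally show ?thesis .
qed

end
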